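(* Let $E$ be an arbitrary directed graph and $R$ a commutative ring with unit. If the Leavitt path algebra $L_R(E)$ is von Neumann regular, then $R$ is von Neumann regular and $E$ contains no cycle.
   Context: A directed graph $E=(E^0,E^1,s,r)$ has vertices $E^0$, edges $E^1$, source and range maps $s,r$. A cycle is a path $e_1\cdots e_n$ ($n\ge1$) with $r(e_i)=s(e_{i+1})$, $s(e_1)=r(e_n)$ and $s(e_i)\ne s(e_j)$ for $i\neq j$. A vertex $v$ is regular if $0<|s^{-1}(v)|<\infty$. The Leavitt path algebra $L_R(E)$ is the $R$-algebra generated by $\{v: v\in E^0\}\cup\{e,e^*: e\in E^1\}$ subject to: $vw=\delta_{v,w}v$; $s(e)e=er(e)=e$; $r(e)e^*=e^*s(e)=e^*$; $e^*f=\delta_{e,f}r(e)$ for $e,f\in E^1$; and $v=\sum_{s(e)=v}ee^*$ for every regular vertex $v$. A ring $A$ is von Neumann regular if $x\in xAx$ for all $x\in A$. *)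

theory Defs
  imports Main
begin

text \<open>Generators of the Leavitt path algebra: vertices, real edges, ghost edges.\<close>
datatype ('v, 'e) gen = GV 'v | GE 'e | GS 'e

text \<open>Elements of the free (non-unital) R-algebra on the generators are finitely
supported functions from words to R (vanishing on the empty word).\<close>

definition gens :: "'v set \<Rightarrow> 'e set \<Rightarrow> ('v, 'e) gen set" where
  "gens V Ed = GV ` V \<union> GE ` Ed \<union> GS ` Ed"

definition free_alg :: "'v set \<Rightarrow> 'e set \<Rightarrow> (('v, 'e) gen list \<Rightarrow> 'r::comm_ring_1) set" where
  "free_alg V Ed = {f. finite {w. f w \<noteq> 0} \<and>
                        (\<forall>w. f w \<noteq> 0 \<longrightarrow> w \<noteq> [] \<and> set w \<subseteq> gens V Ed)}"

definition fa_mult :: "('a list \<Rightarrow> 'r::comm_ring_1) \<Rightarrow> ('a list \<Rightarrow> 'r) \<Rightarrow> ('a list \<Rightarrow> 'r)" where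
  "fa_mult f g = (\<lambda>w. \<Sum>i\<le>length w. f (take i w) * g (drop i w))"

definition mono :: "'a list \<Rightarrow> ('a list \<Rightarrow> 'r::comm_ring_1)" where
  "mono w = (\<lambda>u. if u = w then 1 else 0)"

definition regular_vertex :: "'v set \<Rightarrow> 'e set \<Rightarrow> ('e \<Rightarrow> 'v) \<Rightarrow> 'v \<Rightarrow> bool" where
  "regular_vertex V Ed src v \<longleftrightarrow> v \<in> V \<and> finite {e \<in> Ed. src e = v} \<and> 0 < card {e \<in> Ed. src e = v}"

text \<open>The defining relations of L_R(E), as elements of the free algebra (each relation a = b is encoded as a - b).\<close>
definition lpa_rels :: "'v set \<Rightarrow> 'e set \<Rightarrow> ('e \<Rightarrow> 'v) \<Rightarrow> ('e \<Rightarrow> 'v)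
                        \<Rightarrow> (('v, 'e) gen list \<Rightarrow> 'r::comm_ring_1) set" where
  "lpa_rels V Ed src rng = {\<rho>.
     (\<exists>v\<in>V. \<exists>w\<in>V. \<rho> = (\<lambda>u. mono [GV v, GV w] u - (if v = w then mono [GV v] u else 0))) \<or>
     (\<exists>e\<in>Ed. \<rho> = (\<lambda>u. mono [GV (src e), GE e] u - mono [GE e] u)) \<or>
     (\<exists>e\<in>Ed. \<rho> = (\<lambda>u. mono [GE e, GV (rng e)] u - mono [GE e] u)) \<or>
     (\<exists>e\<in>Ed. \<rho> = (\<lambda>u. mono [GV (rng e), GS e] u - mono [GS e] u)) \<or>
     (\<exists>e\<in>Ed. \<rho> = (\<lambda>u. mono [GS e, GV (src e)] u - mono [GS e] u)) \<or>
     (\<exists>e\<in>Ed. \<exists>f\<in>Ed. \<rho> = (\<lambda>u. mono [GS e, GE f] u - (if e = f then mono [GV (rng e)] u else 0))) \<or>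
     (\<exists>v. regular_vertex V Ed src v \<and>
          \<rho> = (\<lambda>u. mono [GV v] u - (\<Sum>e\<in>{e \<in> Ed. src e = v}. mono [GE e, GS e] u)))}"

inductive_set lpa_ideal :: "'v set \<Rightarrow> 'e set \<Rightarrow> ('e \<Rightarrow> 'v) \<Rightarrow> ('e \<Rightarrow> 'v)
                        \<Rightarrow> (('v, 'e) gen list \<Rightarrow> 'r::comm_ring_1) set"
  for V Ed src rng where
  zero: "(\<lambda>_. 0) \<in> lpa_ideal V Ed src rng"
| gen: "\<rho> \<in> lpa_rels V Ed src rng \<Longrightarrow> set a \<subseteq> gens V Ed \<Longrightarrow> set b \<subseteq> gens V Ed \<Longrightarrow>
        (\<lambda>u. c * fa_mult (fa_mult (mono a) \<rho>) (mono b) u) \<in> lpa_ideal V Ed src rng"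
| add: "x \<in> lpa_ideal V Ed src rng \<Longrightarrow> y \<in> lpa_ideal V Ed src rng \<Longrightarrow>
        (\<lambda>u. x u + y u) \<in> lpa_ideal V Ed src rng"

text \<open>L_R(E) = free_alg / lpa_ideal is von Neumann regular: every class [x] lies in [x] L [x].\<close>
definition lpa_vnr :: "'r::comm_ring_1 itself \<Rightarrow> 'v set \<Rightarrow> 'e set \<Rightarrow> ('e \<Rightarrow> 'v) \<Rightarrow> ('e \<Rightarrow> 'v) \<Rightarrow> bool" where
  "lpa_vnr _ V Ed src rng \<longleftrightarrow>
     (\<forall>x \<in> (free_alg V Ed :: (('v, 'e) gen list \<Rightarrow> 'r) set).
        \<exists>y \<in> free_alg V Ed. (\<lambda>u. x u - fa_mult (fa_mult x y) x u) \<in> lpa_ideal V Ed src rng)"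

definition vnr_ring :: "'r::comm_ring_1 itself \<Rightarrow> bool" where
  "vnr_ring _ \<longleftrightarrow> (\<forall>a::'r. \<exists>b. a = a * b * a)"

definition is_cycle :: "'e set \<Rightarrow> ('e \<Rightarrow> 'v) \<Rightarrow> ('e \<Rightarrow> 'v) \<Rightarrow> 'e list \<Rightarrow> bool" where
  "is_cycle Ed src rng es \<longleftrightarrow> es \<noteq> [] \<and> set es \<subseteq> Ed \<and>
     (\<forall>i. Suc i < length es \<longrightarrow> rng (es ! i) = src (es ! Suc i)) \<and>
     src (hd es) = rng (last es) \<and> distinct (map src es)"

end

theory Submission
  imports Defs
begin

text \<open>The Leavitt path algebra acts on functions of pairs \<open>(q, k)\<close> of a boundary path \<open>q\<close> and
  an integer degree \<open>k\<close>: a vertex keeps the paths starting at it, a real edge strips itself off the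
  front of the path and lowers the degree, a ghost edge prepends itself and raises the degree. All
  defining relations act as zero at boundary paths (the Cuntz--Krieger relation because a boundary
  path starting at a regular vertex has to leave it), so an identity \<open>x = x y x\<close> in \<open>L_R(E)\<close> becomes
  an identity of operators.

  For \<open>x = a v\<close>, evaluating at the indicator of \<open>(q, 0)\<close>, with \<open>q\<close> a boundary path from \<open>v\<close>,
  gives \<open>a = a\<^sup>2 b\<close>. If \<open>c\<close> is a cycle of length \<open>n\<close> at \<open>v\<close>, then \<open>x = v - c\<close> acts at the
  periodic path \<open>c c c \<dots>\<close> as \<open>g k \<mapsto> g k - g (k - n)\<close>; applying \<open>x = x y x\<close> to the indicator of
  that path in non-negative degrees yields a function of bounded support whose differences
  \<open>g k - g (k - n)\<close> form the indicator of \<open>[0, n)\<close>, which is impossible.\<close>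

section \<open>Boundary paths\<close>

text \<open>\<open>FinPath v es\<close> is the finite path \<open>es\<close> ending at the vertex \<open>v\<close> (the trivial path
  at \<open>v\<close> if \<open>es = []\<close>).\<close>
datatype ('v, 'e) bpath = FinPath 'v "'e list" | InfPath "nat \<Rightarrow> 'e"

fun bpath_src :: "('e \<Rightarrow> 'v) \<Rightarrow> ('v, 'e) bpath \<Rightarrow> 'v" where
  "bpath_src s (FinPath v []) = v"
| "bpath_src s (FinPath v (e # es)) = s e"
| "bpath_src s (InfPath p) = s (p 0)"

fun bpath_cons :: "'e \<Rightarrow> ('v, 'e) bpath \<Rightarrow> ('v, 'e) bpath" where
  "bpath_cons e (FinPath v es) = FinPath v (e # es)"
| "bpath_cons e (InfPath p) = InfPath (case_nat e p)"

fun bpath_uncons :: "('v, 'e) bpath \<Rightarrow> ('e \<times> ('v, 'e) bpath) option" where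
  "bpath_uncons (FinPath v []) = None"
| "bpath_uncons (FinPath v (e # es)) = Some (e, FinPath v es)"
| "bpath_uncons (InfPath p) = Some (p 0, InfPath (\<lambda>i. p (Suc i)))"

lemma bpath_uncons_cons [simp]: "bpath_uncons (bpath_cons e q) = Some (e, q)"
  by (cases q) auto

lemma bpath_src_cons [simp]: "bpath_src s (bpath_cons e q) = s e"
  by (cases q) auto

lemma bpath_uncons_SomeD:
  assumes "bpath_uncons q = Some (e, q')"
  shows "q = bpath_cons e q'"
proof (cases q)
  case (FinPath v es)
  then show ?thesis using assms by (cases es) auto
next
  case (InfPath p)
  have "case_nat (p 0) (\<lambda>i. p (Suc i)) = p" by (rule ext) (simp split: nat.split)
  then show ?thesis using assms InfPath by auto
qed

lemma bpath_cons_inject: "bpath_cons e q = bpath_cons e q' \<Longrightarrow> q = q'"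
  by (metis bpath_uncons_cons option.inject prod.inject)

lemma bpath_src_uncons: "bpath_uncons q = Some (e, q') \<Longrightarrow> bpath_src s q = s e"
  using bpath_uncons_SomeD by fastforce

fun path_to :: "'e set \<Rightarrow> ('e \<Rightarrow> 'v) \<Rightarrow> ('e \<Rightarrow> 'v) \<Rightarrow> 'v \<Rightarrow> 'e list \<Rightarrow> bool" where
  "path_to Ed s r v [] \<longleftrightarrow> True"
| "path_to Ed s r v (e # es) \<longleftrightarrow> e \<in> Ed \<and> r e = bpath_src s (FinPath v es) \<and> path_to Ed s r v es"

definition boundary_path :: "'v set \<Rightarrow> 'e set \<Rightarrow> ('e \<Rightarrow> 'v) \<Rightarrow> ('e \<Rightarrow> 'v) \<Rightarrow> ('v, 'e) bpath \<Rightarrow> bool" where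
  "boundary_path V Ed s r q \<longleftrightarrow> (case q of
      FinPath v es \<Rightarrow> \<not> regular_vertex V Ed s v \<and> path_to Ed s r v es
    | InfPath p \<Rightarrow> (\<forall>i. p i \<in> Ed \<and> r (p i) = s (p (Suc i))))"

lemma boundary_path_cons:
  assumes "boundary_path V Ed s r q" and "e \<in> Ed" and "r e = bpath_src s q"
  shows "boundary_path V Ed s r (bpath_cons e q)"
  using assms by (cases q) (auto simp: boundary_path_def split: nat.split)

lemma boundary_path_uncons:
  assumes "boundary_path V Ed s r q" and "bpath_uncons q = Some (e, q')"
  shows "boundary_path V Ed s r q' \<and> e \<in> Ed \<and> r e = bpath_src s q'"
  using assms by (cases q rule: bpath_uncons.cases) (auto simp: boundary_path_def)

lemma boundary_path_regular_src_uncons: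
  "boundary_path V Ed s r q \<Longrightarrow> regular_vertex V Ed s (bpath_src s q) \<Longrightarrow> bpath_uncons q \<noteq> None"
  by (cases q rule: bpath_uncons.cases) (auto simp: boundary_path_def)

text \<open>If no boundary path started at \<open>v\<close>, then \<open>v\<close> would be regular and every range of an
  edge out of \<open>v\<close> would share this property; following chosen edges produces an infinite
  boundary path from \<open>v\<close>.\<close>
lemma exists_boundary_path: "\<exists>q. boundary_path V Ed s r q \<and> bpath_src s q = v"
proof (rule ccontr)
  define B where "B u \<longleftrightarrow> \<not> (\<exists>q. boundary_path V Ed s r q \<and> bpath_src s q = u)" for u
  assume "\<not> ?thesis"
  then have "B v" by (simp add: B_def)
  have out_edge: "\<exists>e. e \<in> Ed \<and> s e = u" if "B u" for u
  proof -
    have "\<not> boundary_path V Ed s r (FinPath u [])" using that by (auto simp: B_def)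
    then have "regular_vertex V Ed s u" by (simp add: boundary_path_def)
    then show ?thesis unfolding regular_vertex_def by (auto simp: card_gt_0_iff)
  qed
  have B_range: "B (r e)" if "B u" "e \<in> Ed" "s e = u" for u e
    using that boundary_path_cons unfolding B_def by (metis bpath_src_cons)
  define next_edge where "next_edge u = (SOME e. e \<in> Ed \<and> s e = u)" for u
  have next_edge: "next_edge u \<in> Ed \<and> s (next_edge u) = u" if "B u" for u
    unfolding next_edge_def using out_edge[OF that] by (rule someI_ex)
  define vs where "vs = rec_nat v (\<lambda>_ u. r (next_edge u))"
  have B_vs: "B (vs i)" for i
    by (induction i) (use \<open>B v\<close> B_range next_edge in \<open>auto simp: vs_def\<close>)
  have "next_edge (vs i) \<in> Ed \<and> r (next_edge (vs i)) = s (next_edge (vs (Suc i)))" for i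
    using next_edge[OF B_vs, of i] next_edge[OF B_vs, of "Suc i"] by (simp add: vs_def)
  then have "boundary_path V Ed s r (InfPath (\<lambda>i. next_edge (vs i)))"
    by (simp add: boundary_path_def)
  moreover have "bpath_src s (InfPath (\<lambda>i. next_edge (vs i))) = v"
    using next_edge[OF B_vs, of 0] by (simp add: vs_def)
  ultimately show False using \<open>B v\<close> by (auto simp: B_def)
qed

section \<open>The action of words on graded boundary paths\<close>

type_synonym ('v, 'e) state = "('v, 'e) bpath \<times> int"

fun gen_step :: "('e \<Rightarrow> 'v) \<Rightarrow> ('e \<Rightarrow> 'v) \<Rightarrow> ('v, 'e) gen
    \<Rightarrow> ('v, 'e) state \<Rightarrow> ('v, 'e) state option" where
  "gen_step s r (GV v) (q, k) = (if bpath_src s q = v then Some (q, k) else None)"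
| "gen_step s r (GE e) (q, k) = (case bpath_uncons q of
      None \<Rightarrow> None
    | Some (e', q') \<Rightarrow> if e' = e then Some (q', k - 1) else None)"
| "gen_step s r (GS e) (q, k) =
    (if r e = bpath_src s q then Some (bpath_cons e q, k + 1) else None)"

fun word_step :: "('e \<Rightarrow> 'v) \<Rightarrow> ('e \<Rightarrow> 'v) \<Rightarrow> ('v, 'e) gen list
    \<Rightarrow> ('v, 'e) state \<Rightarrow> ('v, 'e) state option" where
  "word_step s r [] p = Some p"
| "word_step s r (a # w) p = (case gen_step s r a p of None \<Rightarrow> None | Some p' \<Rightarrow> word_step s r w p')"

lemma word_step_append:
  "word_step s r (u @ w) p = (case word_step s r u p of None \<Rightarrow> None | Some p' \<Rightarrow> word_step s r w p')"
  by (induction u arbitrary: p) (auto split: option.split)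

lemma gen_step_inject: "gen_step s r a p = Some p'' \<Longrightarrow> gen_step s r a p' = Some p'' \<Longrightarrow> p = p'"
  by (cases a; cases p; cases p')
    (auto split: if_splits option.splits prod.splits dest!: bpath_uncons_SomeD bpath_cons_inject)

lemma word_step_inject: "word_step s r w p = Some p'' \<Longrightarrow> word_step s r w p' = Some p'' \<Longrightarrow> p = p'"
proof (induction w arbitrary: p p')
  case (Cons a w)
  then obtain p1 p1' where "gen_step s r a p = Some p1" "gen_step s r a p' = Some p1'"
    and "word_step s r w p1 = Some p''" "word_step s r w p1' = Some p''"
    by (auto split: option.splits)
  then show ?case using Cons.IH gen_step_inject by metis
qed simp

lemma gen_step_boundary_path:
  "gen_step s r a (q, k) = Some (q', k') \<Longrightarrow> boundary_path V Ed s r q \<Longrightarrow> a \<in> gens V Ed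
    \<Longrightarrow> boundary_path V Ed s r q'"
  by (cases a) (auto simp: gens_def split: if_splits option.splits prod.splits
      dest: boundary_path_uncons intro: boundary_path_cons)

lemma word_step_boundary_path:
  "word_step s r w (q, k) = Some (q', k') \<Longrightarrow> boundary_path V Ed s r q \<Longrightarrow> set w \<subseteq> gens V Ed
    \<Longrightarrow> boundary_path V Ed s r q'"
  by (induction w arbitrary: q k) (auto split: option.splits dest: gen_step_boundary_path)

lemma word_step_degree: "word_step s r w (q, k) = Some (q', k') \<Longrightarrow> \<bar>k' - k\<bar> \<le> int (length w)"
proof (induction w arbitrary: q k)
  case (Cons a w)
  then obtain q1 k1 where "gen_step s r a (q, k) = Some (q1, k1)"
    and "word_step s r w (q1, k1) = Some (q', k')"
    by (auto split: option.splits)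
  moreover have "\<bar>k1 - k\<bar> \<le> 1"
    using calculation(1) by (cases a) (auto split: if_splits option.splits)
  ultimately show ?case using Cons.IH by fastforce
qed simp

lemma word_step_real_edges:
  "(\<forall>i<length es. p i = es ! i) \<Longrightarrow>
    word_step s r (map GE es) (InfPath p, k)
      = Some (InfPath (\<lambda>i. p (i + length es)), k - int (length es))"
proof (induction es arbitrary: p k)
  case (Cons e es)
  have "\<forall>i<length es. p (Suc i) = es ! i" using Cons.prems by auto
  from Cons.IH[OF this, of "k - 1"] Cons.prems show ?case by (auto simp: algebra_simps)
qed simp

lemma cycle_boundary_path:
  assumes cyc: "is_cycle Ed s r es"
  defines "q \<equiv> InfPath (\<lambda>i. es ! (i mod length es))"
  shows "boundary_path V Ed s r q" and "bpath_src s q = s (hd es)"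
    and "word_step s r (map GE es) (q, k) = Some (q, k - int (length es))"
proof -
  let ?n = "length es" and ?p = "\<lambda>i. es ! (i mod length es)"
  have "es \<noteq> []" and "set es \<subseteq> Ed" and path: "\<And>i. Suc i < ?n \<Longrightarrow> r (es ! i) = s (es ! Suc i)"
    and closed: "s (hd es) = r (last es)"
    using cyc by (auto simp: is_cycle_def)
  then have "?n > 0" by simp
  have "r (?p i) = s (?p (Suc i))" for i
  proof (cases "Suc (i mod ?n) < ?n")
    case True
    then have "Suc i mod ?n = Suc (i mod ?n)" by (simp add: mod_Suc)
    then show ?thesis using path[OF True] by simp
  next
    case False
    with mod_less_divisor[OF \<open>?n > 0\<close>, of i] have "i mod ?n = ?n - 1" by linarith
    moreover from this have "Suc i mod ?n = 0" using \<open>?n > 0\<close> by (simp add: mod_Suc)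
    ultimately show ?thesis using closed \<open>es \<noteq> []\<close> by (simp add: last_conv_nth hd_conv_nth)
  qed
  moreover have "?p i \<in> Ed" for i using \<open>set es \<subseteq> Ed\<close> \<open>?n > 0\<close> by auto
  ultimately show "boundary_path V Ed s r q" by (simp add: q_def boundary_path_def)
  show "bpath_src s q = s (hd es)" using \<open>es \<noteq> []\<close> by (simp add: q_def hd_conv_nth)
  have "(\<lambda>i. ?p (i + ?n)) = ?p" by simp
  then show "word_step s r (map GE es) (q, k) = Some (q, k - int ?n)"
    using word_step_real_edges[of es ?p s r k] by (simp add: q_def)
qed

definition word_op :: "('e \<Rightarrow> 'v) \<Rightarrow> ('e \<Rightarrow> 'v) \<Rightarrow> ('v, 'e) gen list
    \<Rightarrow> (('v, 'e) state \<Rightarrow> 'r::comm_ring_1) \<Rightarrow> ('v, 'e) state \<Rightarrow> 'r" where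
  "word_op s r w m p = (case word_step s r w p of None \<Rightarrow> 0 | Some p' \<Rightarrow> m p')"

definition supp :: "('a \<Rightarrow> 'r::zero) \<Rightarrow> 'a set" where
  "supp f = {w. f w \<noteq> 0}"

definition alg_op :: "('e \<Rightarrow> 'v) \<Rightarrow> ('e \<Rightarrow> 'v) \<Rightarrow> (('v, 'e) gen list \<Rightarrow> 'r::comm_ring_1)
    \<Rightarrow> (('v, 'e) state \<Rightarrow> 'r) \<Rightarrow> ('v, 'e) state \<Rightarrow> 'r" where
  "alg_op s r f m p = (\<Sum>w\<in>supp f. f w * word_op s r w m p)"

lemma word_op_Cons:
  "word_op s r (a # w) m p = (case gen_step s r a p of None \<Rightarrow> 0 | Some p' \<Rightarrow> word_op s r w m p')"
  by (simp add: word_op_def split: option.split)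

lemma word_op_Nil [simp]: "word_op s r [] m p = m p"
  by (simp add: word_op_def)

lemma word_op_append: "word_op s r (u @ w) m p = word_op s r u (word_op s r w m) p"
  by (simp add: word_op_def word_step_append split: option.split)

lemma word_op_sum: "word_op s r u (\<lambda>p. \<Sum>i\<in>I. F i p) p = (\<Sum>i\<in>I. word_op s r u (F i) p)"
  by (simp add: word_op_def split: option.split)

lemma word_op_cmult: "word_op s r u (\<lambda>p. c * F p) p = c * word_op s r u F p"
  by (simp add: word_op_def split: option.split)

lemma supp_mono [simp]: "supp (mono w :: _ \<Rightarrow> 'r::comm_ring_1) = {w}"
  by (auto simp: supp_def mono_def)

lemma finite_supp_free_alg: "f \<in> free_alg V Ed \<Longrightarrow> finite (supp f)"
  by (simp add: free_alg_def supp_def)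

lemma finite_supp_add:
  fixes f g :: "'a \<Rightarrow> 'r::comm_ring_1"
  shows "finite (supp f) \<Longrightarrow> finite (supp g) \<Longrightarrow> finite (supp (\<lambda>u. f u + g u))"
  by (rule finite_subset[of _ "supp f \<union> supp g"]) (auto simp: supp_def)

lemma finite_supp_diff:
  fixes f g :: "'a \<Rightarrow> 'r::comm_ring_1"
  shows "finite (supp f) \<Longrightarrow> finite (supp g) \<Longrightarrow> finite (supp (\<lambda>u. f u - g u))"
  by (rule finite_subset[of _ "supp f \<union> supp g"]) (auto simp: supp_def)

lemma alg_op_eq_sum:
  "finite S \<Longrightarrow> supp f \<subseteq> S \<Longrightarrow> alg_op s r f m p = (\<Sum>w\<in>S. f w * word_op s r w m p)"
  unfolding alg_op_def by (rule sum.mono_neutral_left) (auto simp: supp_def)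

lemma alg_op_mono [simp]: "alg_op s r (mono w :: _ \<Rightarrow> 'r::comm_ring_1) m p = word_op s r w m p"
  unfolding alg_op_def supp_mono by (simp add: mono_def)

lemma alg_op_add:
  assumes "finite (supp f)" and "finite (supp g)"
  shows "alg_op s r (\<lambda>u. f u + g u) m p = alg_op s r f m p + alg_op s r g m p"
proof -
  have "supp (\<lambda>u. f u + g u) \<subseteq> supp f \<union> supp g" by (auto simp: supp_def)
  with assms show ?thesis
    by (simp add: alg_op_eq_sum[of "supp f \<union> supp g"] distrib_right sum.distrib)
qed

lemma alg_op_cmult:
  assumes "finite (supp f)"
  shows "alg_op s r (\<lambda>u. c * f u) m p = c * alg_op s r f m p"
proof -
  have "supp (\<lambda>u. c * f u) \<subseteq> supp f" by (auto simp: supp_def)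
  with assms show ?thesis
    by (simp add: alg_op_eq_sum[of "supp f"] sum_distrib_left mult.assoc)
qed

lemma alg_op_diff:
  assumes "finite (supp f)" and "finite (supp g)"
  shows "alg_op s r (\<lambda>u. f u - g u) m p = alg_op s r f m p - alg_op s r g m p"
proof -
  have "finite (supp (\<lambda>u. - 1 * g u))" using assms(2) by (simp add: supp_def)
  then show ?thesis
    using alg_op_add[OF assms(1), of "\<lambda>u. - 1 * g u"] alg_op_cmult[OF assms(2), where c = "- 1"]
    by simp
qed

lemma alg_op_scale: "alg_op s r f (\<lambda>p. c * m p) p = c * alg_op s r f m p"
  by (simp add: alg_op_def word_op_cmult sum_distrib_left mult.left_commute)

lemma finite_supp_sum:
  "finite I \<Longrightarrow> (\<And>i. i \<in> I \<Longrightarrow> finite (supp (F i))) \<Longrightarrow> finite (supp (\<lambda>u. \<Sum>i\<in>I. F i u))"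
  by (rule finite_subset[of _ "\<Union>i\<in>I. supp (F i)"])
    (auto simp: supp_def intro: sum.neutral ccontr)

lemma alg_op_sum:
  assumes "finite I" and "\<And>i. i \<in> I \<Longrightarrow> finite (supp (F i))"
  shows "alg_op s r (\<lambda>u. \<Sum>i\<in>I. F i u) m p = (\<Sum>i\<in>I. alg_op s r (F i) m p)"
  using assms
proof (induction I rule: finite_induct)
  case empty
  then show ?case by (simp add: alg_op_def supp_def)
next
  case (insert i I)
  then show ?case by (simp add: alg_op_add finite_supp_sum)
qed

lemma supp_fa_mult: "supp (fa_mult f g) \<subseteq> (\<lambda>(u, w). u @ w) ` (supp f \<times> supp g)"
proof
  fix w assume "w \<in> supp (fa_mult f g)"
  then obtain i where "f (take i w) * g (drop i w) \<noteq> 0"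
    using sum.not_neutral_contains_not_neutral by (force simp: supp_def fa_mult_def)
  then have "(take i w, drop i w) \<in> supp f \<times> supp g" by (auto simp: supp_def)
  then show "w \<in> (\<lambda>(u, w). u @ w) ` (supp f \<times> supp g)" by (rule rev_image_eqI) simp
qed

lemma finite_supp_fa_mult: "finite (supp f) \<Longrightarrow> finite (supp g) \<Longrightarrow> finite (supp (fa_mult f g))"
  by (rule finite_subset[OF supp_fa_mult]) auto

lemma splits_eq_image: "{x. fst x @ snd x = w} = (\<lambda>i. (take i w, drop i w)) ` {..length w}"
proof (intro set_eqI iffI)
  fix x assume "x \<in> {x. fst x @ snd x = w}"
  then show "x \<in> (\<lambda>i. (take i w, drop i w)) ` {..length w}"
    by (intro image_eqI[of _ _ "length (fst x)"]) auto
qed auto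

lemma fa_mult_eq_sum_splits:
  "fa_mult f g w = (\<Sum>x\<in>{x \<in> supp f \<times> supp g. fst x @ snd x = w}. f (fst x) * g (snd x))"
proof -
  have "inj_on (\<lambda>i. (take i w, drop i w)) {..length w}"
    by (rule inj_onI) (metis atMost_iff length_take min.absorb2 prod.inject)
  then have "fa_mult f g w = (\<Sum>x\<in>{x. fst x @ snd x = w}. f (fst x) * g (snd x))"
    by (simp add: fa_mult_def splits_eq_image sum.reindex)
  also have "\<dots> = (\<Sum>x\<in>{x \<in> supp f \<times> supp g. fst x @ snd x = w}. f (fst x) * g (snd x))"
  proof (rule sum.mono_neutral_right)
    show "finite {x. fst x @ snd x = w}" by (simp add: splits_eq_image)
  qed (auto simp: supp_def)
  finally show ?thesis .
qed

lemma alg_op_fa_mult: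
  assumes f: "finite (supp f)" and g: "finite (supp g)"
  shows "alg_op s r (fa_mult f g) m p = alg_op s r f (alg_op s r g m) p"
proof -
  let ?P = "supp f \<times> supp g" and ?cat = "\<lambda>(u, v). u @ v"
  have "alg_op s r (fa_mult f g) m p = (\<Sum>w\<in>?cat ` ?P. fa_mult f g w * word_op s r w m p)"
    by (rule alg_op_eq_sum) (use f g supp_fa_mult in auto)
  also have "\<dots> = (\<Sum>w\<in>?cat ` ?P. \<Sum>x\<in>{x \<in> ?P. ?cat x = w}.
                      f (fst x) * g (snd x) * word_op s r (?cat x) m p)"
    by (intro sum.cong refl) (auto simp: fa_mult_eq_sum_splits sum_distrib_right case_prod_beta)
  also have "\<dots> = (\<Sum>x\<in>?P. f (fst x) * g (snd x) * word_op s r (?cat x) m p)"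
    by (rule sum.group) (use f g in auto)
  also have "\<dots> = (\<Sum>u\<in>supp f. f u * (\<Sum>v\<in>supp g. g v * word_op s r u (word_op s r v m) p))"
    by (simp add: sum.cartesian_product case_prod_beta word_op_append sum_distrib_left mult.assoc)
  also have "\<dots> = alg_op s r f (alg_op s r g m) p"
    by (simp add: alg_op_def[abs_def] word_op_sum word_op_cmult)
  finally show ?thesis .
qed

lemma alg_op_degree_bound:
  assumes "finite (supp f)" and m: "\<And>q k. \<bar>k\<bar> > B \<Longrightarrow> m (q, k) = 0"
    and k: "\<bar>k\<bar> > B + (\<Sum>w\<in>supp f. int (length w))"
  shows "alg_op s r f m (q, k) = 0"
  unfolding alg_op_def
proof (rule sum.neutral, rule ballI)
  fix w assume w: "w \<in> supp f"
  have "word_op s r w m (q, k) = 0"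
  proof (cases "word_step s r w (q, k)")
    case (Some p')
    obtain q' k' where p': "p' = (q', k')" by (cases p')
    have "int (length w) \<le> (\<Sum>w\<in>supp f. int (length w))"
      using w assms(1) by (intro member_le_sum) auto
    then have "\<bar>k'\<bar> > B" using word_step_degree[OF Some[unfolded p']] k by linarith
    then show ?thesis using Some p' m by (simp add: word_op_def)
  qed (simp add: word_op_def)
  then show "f w * word_op s r w m (q, k) = 0" by simp
qed

section \<open>The relations act as zero on boundary paths\<close>

definition acts_as_zero :: "'v set \<Rightarrow> 'e set \<Rightarrow> ('e \<Rightarrow> 'v) \<Rightarrow> ('e \<Rightarrow> 'v)
    \<Rightarrow> (('v, 'e) gen list \<Rightarrow> 'r::comm_ring_1) \<Rightarrow> bool" where
  "acts_as_zero V Ed s r f \<longleftrightarrow> finite (supp f) \<and>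
     (\<forall>m q k. boundary_path V Ed s r q \<longrightarrow> alg_op s r f m (q, k) = 0)"

lemma acts_as_zero_mono:
  assumes "\<And>m q k. boundary_path V Ed s r q \<Longrightarrow> word_op s r w (m :: _ \<Rightarrow> 'r::comm_ring_1) (q, k) = 0"
  shows "acts_as_zero V Ed s r (mono w :: _ \<Rightarrow> 'r)"
  using assms by (auto simp: acts_as_zero_def)

lemma acts_as_zero_mono_diff:
  assumes "\<And>m q k. boundary_path V Ed s r q
             \<Longrightarrow> word_op s r w (m :: _ \<Rightarrow> 'r::comm_ring_1) (q, k) = word_op s r w' m (q, k)"
  shows "acts_as_zero V Ed s r (\<lambda>u. (mono w u :: 'r) - mono w' u)"
  using assms by (simp add: acts_as_zero_def alg_op_diff finite_supp_diff)

lemma acts_as_zero_ck2: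
  fixes V :: "'v set" and Ed :: "'e set"
  assumes reg: "regular_vertex V Ed s v"
  shows "acts_as_zero V Ed s r
           (\<lambda>u. (mono [GV v] u :: 'r::comm_ring_1) - (\<Sum>e\<in>{e \<in> Ed. s e = v}. mono [GE e, GS e] u))"
proof -
  let ?F = "{e \<in> Ed. s e = v}"
  have "finite ?F" using reg by (simp add: regular_vertex_def)
  have fin_sum: "finite (supp (\<lambda>u :: ('v, 'e) gen list. \<Sum>e\<in>?F. (mono [GE e, GS e] u :: 'r)))"
    using \<open>finite ?F\<close> by (simp add: finite_supp_sum)
  have sum_op: "alg_op s r (\<lambda>u. \<Sum>e\<in>?F. mono [GE e, GS e] u) m p
      = (\<Sum>e\<in>?F. word_op s r [GE e, GS e] m p)"
    for m :: "('v, 'e) state \<Rightarrow> 'r" and p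
    using \<open>finite ?F\<close> by (simp add: alg_op_sum)
  have "word_op s r [GV v] m (q, k) = (\<Sum>e\<in>?F. word_op s r [GE e, GS e] m (q, k))"
    if q: "boundary_path V Ed s r q" for m :: "_ \<Rightarrow> 'r" and q k
  proof (cases "bpath_src s q = v")
    case True
    with boundary_path_regular_src_uncons[OF q] reg
    obtain e0 q' where e0: "bpath_uncons q = Some (e0, q')" by fastforce
    then have "e0 \<in> ?F" using boundary_path_uncons[OF q] bpath_src_uncons True by fastforce
    have "word_op s r [GE e, GS e] m (q, k) = (if e = e0 then m (q, k) else 0)" for e
      using e0 boundary_path_uncons[OF q e0] bpath_uncons_SomeD[OF e0] by (simp add: word_op_Cons)
    then show ?thesis using True \<open>finite ?F\<close> \<open>e0 \<in> ?F\<close> by (simp add: word_op_Cons)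
  next
    case False
    then show ?thesis
      by (auto simp: word_op_Cons split: option.split dest: bpath_src_uncons intro!: sum.neutral)
  qed
  then show ?thesis
    using fin_sum sum_op by (simp add: acts_as_zero_def alg_op_diff finite_supp_diff)
qed

lemma lpa_rels_acts_as_zero:
  assumes "\<rho> \<in> lpa_rels V Ed s r"
  shows "acts_as_zero V Ed s r \<rho>"
  using assms unfolding lpa_rels_def
proof (elim CollectE disjE bexE exE conjE)
  fix v w assume "\<rho> = (\<lambda>u. mono [GV v, GV w] u - (if v = w then mono [GV v] u else 0))"
  then show ?thesis
    by (cases "v = w") (auto simp: word_op_Cons intro!: acts_as_zero_mono acts_as_zero_mono_diff)
next
  fix e assume "\<rho> = (\<lambda>u. mono [GV (s e), GE e] u - mono [GE e] u)"
  then show ?thesis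
    by (auto simp: word_op_Cons split: option.split dest: bpath_src_uncons
        intro!: acts_as_zero_mono_diff)
next
  fix e assume "\<rho> = (\<lambda>u. mono [GE e, GV (r e)] u - mono [GE e] u)"
  then show ?thesis
    by (auto simp: word_op_Cons split: option.split intro!: acts_as_zero_mono_diff)
      (metis boundary_path_uncons)
next
  fix e assume "\<rho> = (\<lambda>u. mono [GV (r e), GS e] u - mono [GS e] u)"
  then show ?thesis by (auto simp: word_op_Cons intro!: acts_as_zero_mono_diff)
next
  fix e assume "\<rho> = (\<lambda>u. mono [GS e, GV (s e)] u - mono [GS e] u)"
  then show ?thesis by (auto simp: word_op_Cons intro!: acts_as_zero_mono_diff)
next
  fix e f assume "\<rho> = (\<lambda>u. mono [GS e, GE f] u - (if e = f then mono [GV (r e)] u else 0))"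
  then show ?thesis
    by (cases "e = f") (auto simp: word_op_Cons intro!: acts_as_zero_mono acts_as_zero_mono_diff)
next
  fix v assume "regular_vertex V Ed s v"
    and "\<rho> = (\<lambda>u. mono [GV v] u - (\<Sum>e\<in>{e \<in> Ed. s e = v}. mono [GE e, GS e] u))"
  then show ?thesis by (simp add: acts_as_zero_ck2)
qed

lemma lpa_ideal_acts_as_zero:
  assumes "z \<in> lpa_ideal V Ed s r"
  shows "acts_as_zero V Ed s r z"
  using assms
proof (induction rule: lpa_ideal.induct)
  case zero
  then show ?case by (simp add: acts_as_zero_def supp_def alg_op_def)
next
  case (gen \<rho> a b c)
  from lpa_rels_acts_as_zero[OF gen(1)] have "finite (supp \<rho>)"
    and \<rho>: "\<And>m q k. boundary_path V Ed s r q \<Longrightarrow> alg_op s r \<rho> m (q, k) = 0"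
    by (auto simp: acts_as_zero_def)
  then have fin: "finite (supp (fa_mult (mono a) \<rho>))"
    "finite (supp (fa_mult (fa_mult (mono a) \<rho>) (mono b)))"
    by (simp_all add: finite_supp_fa_mult)
  have "word_op s r a (alg_op s r \<rho> m') (q, k) = 0" if "boundary_path V Ed s r q" for m' q k
    using word_step_boundary_path[OF _ that gen(2)] \<rho>
    by (auto simp: word_op_def split: option.split)
  moreover have "supp (\<lambda>u. c * fa_mult (fa_mult (mono a) \<rho>) (mono b) u)
      \<subseteq> supp (fa_mult (fa_mult (mono a) \<rho>) (mono b))"
    by (auto simp: supp_def)
  ultimately show ?case
    using fin \<open>finite (supp \<rho>)\<close>
    by (auto simp: acts_as_zero_def alg_op_cmult alg_op_fa_mult intro: finite_subset)
next
  case (add x y)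
  then show ?case by (simp add: acts_as_zero_def alg_op_add finite_supp_add)
qed

lemma lpa_vnr_alg_op:
  fixes x :: "('v, 'e) gen list \<Rightarrow> 'r::comm_ring_1"
  assumes vnr: "lpa_vnr TYPE('r) V Ed s r" and x: "x \<in> free_alg V Ed"
  obtains y :: "('v, 'e) gen list \<Rightarrow> 'r" where "finite (supp y)"
    and "\<And>m q k. boundary_path V Ed s r q \<Longrightarrow>
           alg_op s r x m (q, k) = alg_op s r x (alg_op s r y (alg_op s r x m)) (q, k)"
proof -
  from vnr x obtain y where y: "y \<in> free_alg V Ed"
    and z: "(\<lambda>u. x u - fa_mult (fa_mult x y) x u) \<in> lpa_ideal V Ed s r"
    unfolding lpa_vnr_def by (elim ballE bexE) auto
  have fin: "finite (supp x)" "finite (supp y)" "finite (supp (fa_mult x y))"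
    using x y by (simp_all add: finite_supp_free_alg finite_supp_fa_mult)
  then have fin_xyx: "finite (supp (fa_mult (fa_mult x y) x))" by (simp add: finite_supp_fa_mult)
  have identity: "alg_op s r x m (q, k) = alg_op s r x (alg_op s r y (alg_op s r x m)) (q, k)"
    if q: "boundary_path V Ed s r q" for m q k
  proof -
    have "0 = alg_op s r (\<lambda>u. x u - fa_mult (fa_mult x y) x u) m (q, k)"
      using lpa_ideal_acts_as_zero[OF z] q unfolding acts_as_zero_def by simp
    also have "\<dots> = alg_op s r x m (q, k) - alg_op s r x (alg_op s r y (alg_op s r x m)) (q, k)"
      using fin fin_xyx by (simp only: alg_op_diff alg_op_fa_mult)
    finally show ?thesis by simp
  qed
  show thesis using fin(2) identity by (rule that)
qed

lemma vnr_ring_if_lpa_vnr: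
  fixes V :: "'v set" and Ed :: "'e set"
  assumes "V \<noteq> {}" and vnr: "lpa_vnr TYPE('r::comm_ring_1) V Ed s r"
  shows "vnr_ring TYPE('r)"
  unfolding vnr_ring_def
proof
  fix a :: 'r
  obtain v where "v \<in> V" using assms(1) by blast
  define x :: "('v, 'e) gen list \<Rightarrow> 'r" where "x = (\<lambda>u. a * mono [GV v] u)"
  have "x \<in> free_alg V Ed"
    using \<open>v \<in> V\<close> by (auto simp: free_alg_def x_def mono_def gens_def)
  then obtain y where y:
    "\<And>m q k. boundary_path V Ed s r q \<Longrightarrow>
       alg_op s r x m (q, k) = alg_op s r x (alg_op s r y (alg_op s r x m)) (q, k)"
    using lpa_vnr_alg_op[OF vnr] by metis
  obtain q where q: "boundary_path V Ed s r q" "bpath_src s q = v"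
    using exists_boundary_path[of V Ed s r v] by blast
  have x_op: "alg_op s r x m (q', k) = (if bpath_src s q' = v then a * m (q', k) else 0)" for m q' k
    by (simp add: x_def alg_op_cmult word_op_Cons)
  define m :: "('v, 'e) state \<Rightarrow> 'r" where "m p = (if p = (q, 0) then 1 else 0)" for p
  have xm: "alg_op s r x m = (\<lambda>p. a * m p)"
  proof
    fix p show "alg_op s r x m p = a * m p" by (cases p) (simp add: x_op m_def q)
  qed
  have "a = alg_op s r x m (q, 0)" by (simp add: xm m_def)
  also have "\<dots> = alg_op s r x (alg_op s r y (alg_op s r x m)) (q, 0)" by (rule y[OF q(1)])
  also have "\<dots> = a * (a * alg_op s r y m (q, 0))" by (simp add: xm x_op q alg_op_scale)
  finally show "\<exists>b. a = a * b * a" by (metis mult.assoc mult.commute)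
qed

lemma telescoping_indicator_not_bounded:
  fixes g :: "int \<Rightarrow> 'r::comm_ring_1"
  assumes "N > 0" and diff: "\<And>k. g k - g (k - N) = (if 0 \<le> k \<and> k < N then 1 else 0)"
    and bounded: "\<And>k. \<bar>k\<bar> > L \<Longrightarrow> g k = 0"
  shows False
proof -
  have below: "g (- int j * N - N) = g (- N)" for j :: nat
  proof (induction j)
    case (Suc j)
    have "- int (Suc j) * N < 0" using \<open>N > 0\<close> by (intro mult_neg_pos) auto
    then have "g (- int (Suc j) * N) = g (- int (Suc j) * N - N)"
      using diff[of "- int (Suc j) * N"] by simp
    moreover have "- int (Suc j) * N = - int j * N - N" by (simp add: algebra_simps)
    ultimately show ?case using Suc by simp
  qed simp
  have above: "g (int j * N) = g 0" for j :: nat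
  proof (induction j)
    case (Suc j)
    have "int (Suc j) * N \<ge> N" using \<open>N > 0\<close> by simp
    then have "g (int (Suc j) * N) = g (int (Suc j) * N - N)"
      using diff[of "int (Suc j) * N"] by simp
    moreover have "int (Suc j) * N - N = int j * N" by (simp add: algebra_simps)
    ultimately show ?case using Suc by simp
  qed simp
  define J where "J = nat \<bar>L\<bar> + 1"
  have "int J \<le> int J * N" using \<open>N > 0\<close> mult_le_cancel_left1 by fastforce
  then have "\<bar>- int J * N - N\<bar> > L" and "\<bar>int J * N\<bar> > L"
    using \<open>N > 0\<close> unfolding J_def by linarith+
  then have "g (- N) = 0" and "g 0 = 0" using below[of J] above[of J] bounded by simp_all
  then show False using diff[of 0] \<open>N > 0\<close> by simp
qed

lemma no_cycle_if_lpa_vnr: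
  fixes V :: "'v set" and Ed :: "'e set"
  assumes edges: "\<forall>e\<in>Ed. s e \<in> V \<and> r e \<in> V" and vnr: "lpa_vnr TYPE('r::comm_ring_1) V Ed s r"
  shows "\<not> is_cycle Ed s r es"
proof
  assume cyc: "is_cycle Ed s r es"
  define n where "n = int (length es)"
  define v where "v = s (hd es)"
  define c :: "('v, 'e) gen list" where "c = map GE es"
  define q :: "('v, 'e) bpath" where "q = InfPath (\<lambda>i. es ! (i mod length es))"
  have q: "boundary_path V Ed s r q" "bpath_src s q = v"
    and c_step: "\<And>k. word_step s r c (q, k) = Some (q, k - n)"
    using cycle_boundary_path[OF cyc] by (simp_all add: q_def v_def c_def n_def)
  have "es \<noteq> []" "set es \<subseteq> Ed" using cyc by (auto simp: is_cycle_def)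
  then have "n > 0" and "v \<in> V" using edges hd_in_set by (auto simp: n_def v_def)
  define x :: "('v, 'e) gen list \<Rightarrow> 'r" where "x = (\<lambda>u. mono [GV v] u - mono c u)"
  have "x \<in> free_alg V Ed"
    using \<open>v \<in> V\<close> \<open>es \<noteq> []\<close> \<open>set es \<subseteq> Ed\<close>
    by (auto simp: free_alg_def x_def mono_def gens_def c_def supp_def
        intro: finite_subset[of _ "{[GV v], c}"])
  then obtain y where "finite (supp y)" and y:
    "\<And>m q k. boundary_path V Ed s r q \<Longrightarrow>
       alg_op s r x m (q, k) = alg_op s r x (alg_op s r y (alg_op s r x m)) (q, k)"
    using lpa_vnr_alg_op[OF vnr] by metis
  have x_op: "alg_op s r x m p = word_op s r [GV v] m p - word_op s r c m p" for m p
    by (simp add: x_def alg_op_diff)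
  have x_at_q: "alg_op s r x m (q, k) = m (q, k) - m (q, k - n)" for m k
    by (simp add: x_op word_op_Cons word_op_def c_step q)
  define f :: "('v, 'e) state \<Rightarrow> 'r" where "f p = (if fst p = q \<and> snd p \<ge> 0 then 1 else 0)" for p
  define h where "h = alg_op s r x f"
  have h_at_q: "h (q, k) = (if 0 \<le> k \<and> k < n then 1 else 0)" for k
    using \<open>n > 0\<close> by (simp add: h_def x_at_q f_def)
  have h_off_q: "h (q', k) = 0" if "q' \<noteq> q" for q' k
  proof -
    have "word_op s r c f (q', k) = 0"
    proof (cases "word_step s r c (q', k)")
      case (Some p)
      have "fst p \<noteq> q"
        using word_step_inject[OF Some, of "(fst p, snd p + n)"] c_step that by auto
      then show ?thesis using Some by (simp add: word_op_def f_def)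
    qed (simp add: word_op_def)
    then show ?thesis using that by (simp add: h_def x_op word_op_Cons f_def)
  qed
  define g where "g k = alg_op s r y h (q, k)" for k
  have "g k - g (k - n) = (if 0 \<le> k \<and> k < n then 1 else 0)" for k
    using y[OF q(1), of f k] by (simp add: g_def h_def x_at_q h_at_q[symmetric])
  moreover have "g k = 0" if "\<bar>k\<bar> > n + (\<Sum>w\<in>supp y. int (length w))" for k
    unfolding g_def
  proof (rule alg_op_degree_bound[OF \<open>finite (supp y)\<close> _ that])
    show "h (q', k') = 0" if "\<bar>k'\<bar> > n" for q' k'
      using that h_at_q h_off_q by (cases "q' = q") auto
  qed
  ultimately show False using \<open>n > 0\<close> by (rule telescoping_indicator_not_bounded[rotated])
qed

theorem mainTheorem13:
  fixes V :: "'v set" and Ed :: "'e set" and src rng :: "'e \<Rightarrow> 'v"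
  assumes "\<forall>e\<in>Ed. src e \<in> V \<and> rng e \<in> V"
    and "V \<noteq> {}"
    and "lpa_vnr TYPE('r::comm_ring_1) V Ed src rng"
  shows "vnr_ring TYPE('r) \<and> \<not> (\<exists>es. is_cycle Ed src rng es)"
  using vnr_ring_if_lpa_vnr[OF assms(2,3)] no_cycle_if_lpa_vnr[OF assms(1,3)] by blast

end
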